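(* Let $(X,\triangleright)$ be a topological quandle and let $(C_*(X),\partial_* )$ be its singular quandle chain groups and boundary maps as described in the context. Then for every $n$ the composition $C_n(X)\xrightarrow{\partial_n} C_{n-1}(X)\xrightarrow{\partial_{n-1}} C_{n-2}(X)$ is zero.
   Context: A quandle is a set $X$ with a binary operation $\triangleright$ such that $x\triangleright x=x$ for all $x$, each map $\beta_y(x)=x\triangleright y$ is bijective, and $(x\triangleright y)\triangleright z=(x\triangleright z)\triangleright(y\triangleright z)$. A topological quandle is a topological space $X$ with a quandle operation $\triangleright:X\times X\to X$ that is continuous and such that every $\beta_y$ is a homeomorphism. Let $\Delta^n$ be the standard $n$-simplex with vertices $e_0,\dots,e_n$ (and let $\bar e_0,\dots,\bar e_{n-1}$ be the vertices of $\Delta^{n-1}$). A singular $n$-simplex is a continuous map $\sigma:\Delta^n\to X$; we write $\sigma=\sigma_{[x_1,\dots,x_{n+1}]}$ to indicate $x_i=\sigma(e_{i-1})$. Singular $n$-simplices form a quandle under the pointwise operation $(\sigma\triangleright\tau)(t)=\sigma(t)\triangleright\tau(t)$. $C_n(X)$ is the free abelian group on all singular $n$-simplices. For $2\le i\le n+1$, let $d_i\sigma$ be $\sigma$ composed with the affine map $\Delta^{n-1}\to\Delta^n$ sending $\bar e_j\mapsto e_j$ for $j\le i-2$ and $\bar e_j\mapsto e_{j+1}$ for $j\ge i-1$ (the face omitting the $i$-th vertex $x_i$), and let $s_i\sigma=\sigma\circ\iota_i$ where $\iota_i:\Delta^{n-1}\to\Delta^n$ is the affine map $\sum_{j=0}^{n-1}t_j\bar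 e_j\mapsto(\sum_{k=0}^{i-2}t_k)e_{i-1}+\sum_{j=i-1}^{n-1}t_je_{j+1}$ (so $s_i\sigma$ has vertices $x_i,\dots,x_i$ ($i-1$ times), $x_{i+1},\dots,x_{n+1}$). The boundary $\partial_n:C_n(X)\to C_{n-1}(X)$ is defined on generators by $\partial_n\sigma=\sum_{i=2}^{n+1}(-1)^i\big(d_i\sigma-d_i\sigma\triangleright s_i\sigma\big)$ and extended linearly; $\partial_0=0$. *)

theory Defs
  imports "HOL-Homology.Homology"
begin

definition topological_quandle :: "'a topology \<Rightarrow> ('a \<Rightarrow> 'a \<Rightarrow> 'a) \<Rightarrow> bool" where
  "topological_quandle X q \<longleftrightarrow>
     (\<forall>x\<in>topspace X. \<forall>y\<in>topspace X. q x y \<in> topspace X)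
   \<and> (\<forall>x\<in>topspace X. q x x = x)
   \<and> (\<forall>y\<in>topspace X. bij_betw (\<lambda>x. q x y) (topspace X) (topspace X))
   \<and> (\<forall>x\<in>topspace X. \<forall>y\<in>topspace X. \<forall>z\<in>topspace X.
        q (q x y) z = q (q x z) (q y z))
   \<and> continuous_map (prod_topology X X) X (\<lambda>(x, y). q x y)
   \<and> (\<forall>y\<in>topspace X. homeomorphic_map X X (\<lambda>x. q x y))"

definition simplex_op :: "nat \<Rightarrow> ('a \<Rightarrow> 'a \<Rightarrow> 'a) \<Rightarrow> ((nat \<Rightarrow> real) \<Rightarrow> 'a)
    \<Rightarrow> ((nat \<Rightarrow> real) \<Rightarrow> 'a) \<Rightarrow> (nat \<Rightarrow> real) \<Rightarrow> 'a" where
  "simplex_op n q \<sigma> \<tau> = restrict (\<lambda>t. q (\<sigma> t) (\<tau> t)) (standard_simplex n)"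

text \<open>The affine map iota_i : Delta^(n-1) -> Delta^n (i >= 2), in barycentric coordinates:
  coordinates 0..i-2 become 0, coordinate i-1 is t_0+...+t_(i-2),
  coordinate j >= i is t_(j-1).\<close>
definition degen_map :: "nat \<Rightarrow> (nat \<Rightarrow> real) \<Rightarrow> (nat \<Rightarrow> real)" where
  "degen_map i t = (\<lambda>j. if j < i - 1 then 0
                         else if j = i - 1 then (\<Sum>k<i - 1. t k)
                         else t (j - 1))"

definition quandle_s :: "nat \<Rightarrow> nat \<Rightarrow> ((nat \<Rightarrow> real) \<Rightarrow> 'a) \<Rightarrow> (nat \<Rightarrow> real) \<Rightarrow> 'a" where
  "quandle_s n i \<sigma> = restrict (\<sigma> \<circ> degen_map i) (standard_simplex (n - 1))"

text \<open>d_i sigma (2 <= i <= n+1) omits the i-th vertex x_i = sigma(e_(i-1)),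
  i.e. it is the library's face singular_face n (i-1).\<close>
definition quandle_d :: "nat \<Rightarrow> nat \<Rightarrow> ((nat \<Rightarrow> real) \<Rightarrow> 'a) \<Rightarrow> (nat \<Rightarrow> real) \<Rightarrow> 'a" where
  "quandle_d n i \<sigma> = singular_face n (i - 1) \<sigma>"

definition quandle_boundary_gen :: "('a \<Rightarrow> 'a \<Rightarrow> 'a) \<Rightarrow> nat \<Rightarrow> ((nat \<Rightarrow> real) \<Rightarrow> 'a) \<Rightarrow> 'a chain" where
  "quandle_boundary_gen q n \<sigma> =
     (\<Sum>i\<in>{2..n+1}. frag_cmul ((-1) ^ i)
        (frag_of (quandle_d n i \<sigma>)
         - frag_of (simplex_op (n - 1) q (quandle_d n i \<sigma>) (quandle_s n i \<sigma>))))"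

definition quandle_boundary :: "('a \<Rightarrow> 'a \<Rightarrow> 'a) \<Rightarrow> nat \<Rightarrow> 'a chain \<Rightarrow> 'a chain" where
  "quandle_boundary q n c = (if n = 0 then 0 else frag_extend (quandle_boundary_gen q n) c)"

end

theory Submission
  imports Defs
begin

(* Put e_i \<sigma> = d_i \<sigma> \<triangleright> s_i \<sigma>, so that \<partial>\<sigma> = \<Sum>_i (-1)^i (d_i \<sigma> - e_i \<sigma>).
  For j < i the faces satisfy d_j d_i = d_(i-1) d_j, and the collapsing maps satisfy
  d_j s_i = s_(i-1) d_j, s_j d_i = d_(i-1) s_j and s_j s_i = s_(i-1) s_j = d_j s_i.
  As d_j and s_j commute with the pointwise operation, e_j obeys the same commutation rule as
  d_j with respect to both d_i and e_i; for e_j e_i this is where idempotence and right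
  self-distributivity enter, through (x \<triangleright> v) \<triangleright> (u \<triangleright> v) = (x \<triangleright> u) \<triangleright> v = (x \<triangleright> u) \<triangleright> (v \<triangleright> v)
  for x = d_j d_i \<sigma>, u = s_j d_i \<sigma>, v = d_j s_i \<sigma>. Then, exactly as for cubical chains,
  the terms (i, j) and (j, i - 1) of \<partial>\<partial>\<sigma> cancel in pairs. *)

section \<open>Boundaries built from two families of face maps\<close>

lemma sum_sum_cancel_pairs:
  fixes G :: "nat \<Rightarrow> nat \<Rightarrow> 'b::ab_group_add"
  assumes antisym: "\<And>i j. 2 \<le> j \<Longrightarrow> j < i \<Longrightarrow> i \<le> n + 1 \<Longrightarrow> G j (i - 1) = - G i j"
  shows "(\<Sum>i\<in>{2..n+1}. \<Sum>j\<in>{2..n}. G i j) = 0"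
proof -
  define below where "below = {(i, j). 2 \<le> j \<and> j < i \<and> i \<le> n + 1}"
  define above where "above = {(i, j). 2 \<le> i \<and> i \<le> j \<and> j \<le> n}"
  have domain: "{2..n+1} \<times> {2..n} = below \<union> above"
    by (auto simp: below_def above_def)
  have fin: "finite below" "finite above"
    by (auto intro: finite_subset[of _ "{..n+1} \<times> {..n+1}"] simp: below_def above_def)
  have "(\<Sum>i\<in>{2..n+1}. \<Sum>j\<in>{2..n}. G i j) = (\<Sum>(i, j)\<in>below \<union> above. G i j)"
    by (simp only: sum.cartesian_product domain)
  also have "\<dots> = (\<Sum>(i, j)\<in>below. G i j) + (\<Sum>(i, j)\<in>above. G i j)"
    using fin by (rule sum.union_disjoint) (auto simp: below_def above_def)
  also have "(\<Sum>(i, j)\<in>above. G i j) = (\<Sum>(i, j)\<in>below. G j (i - 1))"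
    by (rule sum.reindex_bij_witness[where i="\<lambda>(i, j). (j, i - 1)" and j="\<lambda>(i, j). (Suc j, i)"])
       (auto simp: below_def above_def)
  also have "\<dots> = (\<Sum>(i, j)\<in>below. - G i j)"
    by (rule sum.cong) (auto simp: below_def antisym[simplified])
  finally show ?thesis
    by (simp only: split_def sum_negf add.right_inverse)
qed

lemma frag_extend_frag_extend:
  "frag_extend f (frag_extend g c) = frag_extend (\<lambda>x. frag_extend f (g x)) c"
  using subset_UNIV
  by (induction c rule: frag_induction) (auto simp: frag_extend_diff)

lemma frag_cmul_diff_distrib2: "frag_cmul k (a - b) = frag_cmul k a - frag_cmul k b"
  by (metis diff_add_cancel frag_cmul_distrib2 add_diff_cancel_right')

lemma frag_cmul_minus: "frag_cmul (- k) x = - frag_cmul k x"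
  by (metis frag_cmul_cmul frag_cmul_minus_one mult_minus1)

definition face_pair_boundary ::
    "(nat \<Rightarrow> nat \<Rightarrow> 'b \<Rightarrow> 'b) \<Rightarrow> (nat \<Rightarrow> nat \<Rightarrow> 'b \<Rightarrow> 'b) \<Rightarrow> nat \<Rightarrow> 'b \<Rightarrow> 'b \<Rightarrow>\<^sub>0 int" where
  "face_pair_boundary d e n x =
     (\<Sum>i\<in>{2..n+1}. frag_cmul ((-1) ^ i) (frag_of (d n i x) - frag_of (e n i x)))"

lemma face_pair_boundary_boundary:
  assumes dd: "\<And>i j. 2 \<le> j \<Longrightarrow> j < i \<Longrightarrow> i \<le> n + 1 \<Longrightarrow>
      d (n - 1) j (d n i x) = d (n - 1) (i - 1) (d n j x)"
    and de: "\<And>i j. 2 \<le> j \<Longrightarrow> j < i \<Longrightarrow> i \<le> n + 1 \<Longrightarrow>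
      d (n - 1) j (e n i x) = e (n - 1) (i - 1) (d n j x)"
    and ed: "\<And>i j. 2 \<le> j \<Longrightarrow> j < i \<Longrightarrow> i \<le> n + 1 \<Longrightarrow>
      e (n - 1) j (d n i x) = d (n - 1) (i - 1) (e n j x)"
    and ee: "\<And>i j. 2 \<le> j \<Longrightarrow> j < i \<Longrightarrow> i \<le> n + 1 \<Longrightarrow>
      e (n - 1) j (e n i x) = e (n - 1) (i - 1) (e n j x)"
  shows "frag_extend (face_pair_boundary d e (n - 1)) (face_pair_boundary d e n x) = 0"
proof -
  let ?b = "face_pair_boundary d e (n - 1)"
  define G where "G i j = frag_cmul ((-1) ^ (i + j))
    ((frag_of (d (n - 1) j (d n i x)) - frag_of (e (n - 1) j (d n i x)))
     - (frag_of (d (n - 1) j (e n i x)) - frag_of (e (n - 1) j (e n i x))))" for i j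
  have inner: "{2..n - 1 + 1} = {2..n}"
    by auto
  have "frag_extend ?b (face_pair_boundary d e n x)
      = (\<Sum>i\<in>{2..n+1}. frag_cmul ((-1) ^ i) (?b (d n i x) - ?b (e n i x)))"
    unfolding face_pair_boundary_def[of d e n]
    by (simp only: frag_extend_sum[OF finite_atLeastAtMost] o_def frag_extend_cmul
        frag_extend_diff frag_extend_of)
  also have "\<dots> = (\<Sum>i\<in>{2..n+1}. \<Sum>j\<in>{2..n}. G i j)"
    unfolding face_pair_boundary_def inner G_def
    by (simp only: frag_cmul_sum frag_cmul_diff_distrib2 frag_cmul_cmul power_add sum_subtractf)
  also have "\<dots> = 0"
  proof (rule sum_sum_cancel_pairs)
    fix i j assume ij: "2 \<le> j" "j < i" "i \<le> n + 1"
    have sign: "(-1::int) ^ (j + (i - 1)) = - ((-1) ^ (i + j))"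
      using \<open>j < i\<close> by (cases i) (auto simp: add.commute)
    show "G j (i - 1) = - G i j"
      unfolding G_def sign dd[OF ij] de[OF ij] ed[OF ij] ee[OF ij] frag_cmul_minus
      by (simp add: algebra_simps)
  qed
  finally show ?thesis .
qed

section \<open>Faces and collapsing maps of the standard simplex\<close>

lemma sum_simplical_face:
  "a \<le> c \<Longrightarrow> (\<Sum>k<Suc c. simplical_face a t k) = (\<Sum>k<c. (t::nat \<Rightarrow> real) k)"
  by (induction c rule: dec_induct) (simp_all add: simplical_face_def)

lemma sum_degen_map:
  "a \<le> p \<Longrightarrow> (\<Sum>j\<le>p. degen_map (Suc a) t j) = (\<Sum>k<p. t k)"
proof (induction p rule: dec_induct)
  case base
  have "(\<Sum>j\<le>a. degen_map (Suc a) t j) = (\<Sum>j<a. degen_map (Suc a) t j) + degen_map (Suc a) t a"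
    by (simp add: lessThan_Suc_atMost[symmetric])
  then show ?case
    by (simp add: degen_map_def)
qed (simp add: degen_map_def)

lemma degen_map_in_standard_simplex:
  assumes t: "t \<in> standard_simplex p" and i: "1 \<le> i" "i \<le> p + 2"
  shows "degen_map i t \<in> standard_simplex (Suc p)"
proof -
  obtain a where "i = Suc a"
    using i(1) by (cases i) auto
  with i have a: "i = Suc a" "a \<le> Suc p"
    by simp_all
  have t01: "\<And>k. 0 \<le> t k \<and> t k \<le> 1" and t0: "\<And>k. k > p \<Longrightarrow> t k = 0"
    and t1: "(\<Sum>k\<le>p. t k) = 1"
    using t by (auto simp: standard_simplex_def)
  have "(\<Sum>k<a. t k) \<le> (\<Sum>k\<le>p. t k)"
    by (rule sum_mono2) (use a t01 in auto)
  moreover have "0 \<le> (\<Sum>k<a. t k)"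
    by (rule sum_nonneg) (use t01 in auto)
  ultimately have "0 \<le> degen_map i t k \<and> degen_map i t k \<le> 1" for k
    using t01 t1 a by (auto simp: degen_map_def)
  moreover have "degen_map i t k = 0" if "k > Suc p" for k
    using that a t0 by (auto simp: degen_map_def)
  moreover have "(\<Sum>k\<le>Suc p. degen_map i t k) = 1"
    using sum_degen_map[OF a(2), of t] t1 a(1) by (simp add: lessThan_Suc_atMost)
  ultimately show ?thesis
    by (auto simp: standard_simplex_def)
qed

lemma simplical_face_in_standard_simplex_Suc:
  "t \<in> standard_simplex m \<Longrightarrow> k \<le> Suc m \<Longrightarrow> simplical_face k t \<in> standard_simplex (Suc m)"
  using simplical_face_in_standard_simplex[of "Suc m" k t] by simp

lemma simplical_face_simplical_face:
  "a \<le> c \<Longrightarrow> simplical_face a (simplical_face c t) = simplical_face (Suc c) (simplical_face a t)"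
  by (rule ext) (auto simp: simplical_face_def)

lemma degen_map_simplical_face:
  "a \<le> c \<Longrightarrow> degen_map (Suc a) (simplical_face c t) = simplical_face (Suc c) (degen_map (Suc a) t)"
  by (rule ext) (auto simp: simplical_face_def degen_map_def intro!: sum.cong)

lemma simplical_face_degen_map:
  assumes "a \<le> c"
  shows "simplical_face a (degen_map (Suc c) t) = degen_map (Suc (Suc c)) (simplical_face a t)"
proof (rule ext)
  fix k
  show "simplical_face a (degen_map (Suc c) t) k = degen_map (Suc (Suc c)) (simplical_face a t) k"
    using assms sum_simplical_face[OF assms, of t]
    by (cases "k < a"; cases "k = a"; cases "k < Suc c"; cases "k = Suc c")
       (auto simp: simplical_face_def degen_map_def)
qed

lemma degen_map_degen_map_lower:
  assumes "1 \<le> a" "a \<le> c"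
  shows "degen_map (Suc (Suc c)) (degen_map (Suc a) t) = degen_map (Suc (Suc c)) (simplical_face a t)"
proof (rule ext)
  fix k
  have "(\<Sum>k<Suc c. degen_map (Suc a) t k) = (\<Sum>k<c. t k)"
    using sum_degen_map[OF assms(2), of t] by (simp add: lessThan_Suc_atMost)
  then show "degen_map (Suc (Suc c)) (degen_map (Suc a) t) k = degen_map (Suc (Suc c)) (simplical_face a t) k"
    using assms sum_simplical_face[OF assms(2), of t]
    by (cases "k < Suc c"; cases "k = Suc c") (auto simp: simplical_face_def degen_map_def)
qed

lemma degen_map_lower_degen_map:
  assumes "1 \<le> a" "a \<le> c"
  shows "degen_map (Suc a) (degen_map (Suc c) t) = degen_map (Suc (Suc c)) (simplical_face a t)"
proof (rule ext)
  fix k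
  have "(\<Sum>k<a. degen_map (Suc c) t k) = 0"
    using assms by (simp add: degen_map_def)
  then show "degen_map (Suc a) (degen_map (Suc c) t) k = degen_map (Suc (Suc c)) (simplical_face a t) k"
    using assms sum_simplical_face[OF assms(2), of t]
    by (cases "k < a"; cases "k = a"; cases "k < Suc c"; cases "k = Suc c")
       (auto simp: simplical_face_def degen_map_def)
qed

section \<open>Quandle faces of singular simplices\<close>

lemma quandle_d_apply:
  "t \<in> standard_simplex (n - 1) \<Longrightarrow> quandle_d n i \<sigma> t = \<sigma> (simplical_face (i - 1) t)"
  by (simp add: quandle_d_def singular_face_def)

lemma quandle_s_apply:
  "t \<in> standard_simplex (n - 1) \<Longrightarrow> quandle_s n i \<sigma> t = \<sigma> (degen_map i t)"
  by (simp add: quandle_s_def)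

lemma face_index_pair_cases:
  assumes "2 \<le> j" "j < i" "i \<le> n + 1"
  obtains m a c where "n = Suc (Suc m)" "j = Suc a" "i = Suc (Suc c)" "1 \<le> a" "a \<le> c" "c \<le> Suc m"
proof
  show "n = Suc (Suc (n - 2))" "j = Suc (j - 1)" "i = Suc (Suc (i - 2))"
    "1 \<le> j - 1" "j - 1 \<le> i - 2" "i - 2 \<le> Suc (n - 2)"
    using assms by auto
qed

lemma restrict_comp_restrict_cong:
  assumes "g \<in> B \<rightarrow> A" "g' \<in> B \<rightarrow> A" "\<And>t. t \<in> B \<Longrightarrow> f (g t) = f' (g' t)"
  shows "restrict (restrict (\<sigma> \<circ> f) A \<circ> g) B = restrict (restrict (\<sigma> \<circ> f') A \<circ> g') B"
  using assms by (intro restrict_ext) auto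

lemma quandle_d_quandle_d:
  assumes "2 \<le> j" "j < i" "i \<le> n + 1"
  shows "quandle_d (n - 1) j (quandle_d n i \<sigma>) = quandle_d (n - 1) (i - 1) (quandle_d n j \<sigma>)"
proof -
  obtain m a c where n: "n = Suc (Suc m)"
    and ij: "j = Suc a" "i = Suc (Suc c)" "1 \<le> a" "a \<le> c" "c \<le> Suc m"
    using assms by (rule face_index_pair_cases)
  show ?thesis
    unfolding quandle_d_def singular_face_def quandle_s_def n ij diff_Suc_1 diff_Suc_Suc minus_nat.diff_0
    by (rule restrict_comp_restrict_cong)
       (use ij in \<open>auto simp: simplical_face_in_standard_simplex_Suc degen_map_in_standard_simplex
          simplical_face_simplical_face\<close>)
qed

lemma quandle_d_quandle_s:
  assumes "2 \<le> j" "j < i" "i \<le> n + 1"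
  shows "quandle_d (n - 1) j (quandle_s n i \<sigma>) = quandle_s (n - 1) (i - 1) (quandle_d n j \<sigma>)"
proof -
  obtain m a c where n: "n = Suc (Suc m)"
    and ij: "j = Suc a" "i = Suc (Suc c)" "1 \<le> a" "a \<le> c" "c \<le> Suc m"
    using assms by (rule face_index_pair_cases)
  show ?thesis
    unfolding quandle_d_def singular_face_def quandle_s_def n ij diff_Suc_1 diff_Suc_Suc minus_nat.diff_0
    by (rule restrict_comp_restrict_cong)
       (use ij in \<open>auto simp: simplical_face_in_standard_simplex_Suc degen_map_in_standard_simplex
          simplical_face_degen_map\<close>)
qed

lemma quandle_s_quandle_d:
  assumes "2 \<le> j" "j < i" "i \<le> n + 1"
  shows "quandle_s (n - 1) j (quandle_d n i \<sigma>) = quandle_d (n - 1) (i - 1) (quandle_s n j \<sigma>)"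
proof -
  obtain m a c where n: "n = Suc (Suc m)"
    and ij: "j = Suc a" "i = Suc (Suc c)" "1 \<le> a" "a \<le> c" "c \<le> Suc m"
    using assms by (rule face_index_pair_cases)
  show ?thesis
    unfolding quandle_d_def singular_face_def quandle_s_def n ij diff_Suc_1 diff_Suc_Suc minus_nat.diff_0
    by (rule restrict_comp_restrict_cong)
       (use ij in \<open>auto simp: simplical_face_in_standard_simplex_Suc degen_map_in_standard_simplex
          degen_map_simplical_face\<close>)
qed

lemma quandle_s_quandle_s:
  assumes "2 \<le> j" "j < i" "i \<le> n + 1"
  shows "quandle_s (n - 1) j (quandle_s n i \<sigma>) = quandle_d (n - 1) j (quandle_s n i \<sigma>)"
proof -
  obtain m a c where n: "n = Suc (Suc m)"
    and ij: "j = Suc a" "i = Suc (Suc c)" "1 \<le> a" "a \<le> c" "c \<le> Suc m"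
    using assms by (rule face_index_pair_cases)
  show ?thesis
    unfolding quandle_d_def singular_face_def quandle_s_def n ij diff_Suc_1 diff_Suc_Suc minus_nat.diff_0
    by (rule restrict_comp_restrict_cong)
       (use ij in \<open>auto simp: simplical_face_in_standard_simplex_Suc degen_map_in_standard_simplex
          degen_map_degen_map_lower\<close>)
qed

lemma quandle_s_quandle_s':
  assumes "2 \<le> j" "j < i" "i \<le> n + 1"
  shows "quandle_s (n - 1) (i - 1) (quandle_s n j \<sigma>) = quandle_d (n - 1) j (quandle_s n i \<sigma>)"
proof -
  obtain m a c where n: "n = Suc (Suc m)"
    and ij: "j = Suc a" "i = Suc (Suc c)" "1 \<le> a" "a \<le> c" "c \<le> Suc m"
    using assms by (rule face_index_pair_cases)
  show ?thesis
    unfolding quandle_d_def singular_face_def quandle_s_def n ij diff_Suc_1 diff_Suc_Suc minus_nat.diff_0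
    by (rule restrict_comp_restrict_cong)
       (use ij in \<open>auto simp: simplical_face_in_standard_simplex_Suc degen_map_in_standard_simplex
          degen_map_lower_degen_map\<close>)
qed

lemma quandle_d_simplex_op:
  "i \<le> p + 2 \<Longrightarrow>
    quandle_d (Suc p) i (simplex_op (Suc p) q \<sigma> \<tau>) = simplex_op p q (quandle_d (Suc p) i \<sigma>) (quandle_d (Suc p) i \<tau>)"
  unfolding quandle_d_def singular_face_def simplex_op_def diff_Suc_Suc minus_nat.diff_0
  by (intro restrict_ext) (simp add: simplical_face_in_standard_simplex_Suc)

lemma quandle_s_simplex_op:
  "1 \<le> i \<Longrightarrow> i \<le> p + 2 \<Longrightarrow>
    quandle_s (Suc p) i (simplex_op (Suc p) q \<sigma> \<tau>) = simplex_op p q (quandle_s (Suc p) i \<sigma>) (quandle_s (Suc p) i \<tau>)"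
  unfolding quandle_s_def simplex_op_def diff_Suc_1
  by (intro restrict_ext) (simp add: degen_map_in_standard_simplex)

lemma quandle_d_image_subset:
  "\<sigma> ` standard_simplex (Suc p) \<subseteq> S \<Longrightarrow> i \<le> p + 2 \<Longrightarrow> quandle_d (Suc p) i \<sigma> ` standard_simplex p \<subseteq> S"
  by (auto simp: quandle_d_apply simplical_face_in_standard_simplex_Suc)

lemma quandle_s_image_subset:
  "\<sigma> ` standard_simplex (Suc p) \<subseteq> S \<Longrightarrow> 1 \<le> i \<Longrightarrow> i \<le> p + 2 \<Longrightarrow> quandle_s (Suc p) i \<sigma> ` standard_simplex p \<subseteq> S"
  by (auto simp: quandle_s_apply degen_map_in_standard_simplex)

lemma topological_quandle_idem:
  "topological_quandle X q \<Longrightarrow> x \<in> topspace X \<Longrightarrow> q x x = x"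
  unfolding topological_quandle_def by blast

lemma topological_quandle_self_distrib:
  "topological_quandle X q \<Longrightarrow> x \<in> topspace X \<Longrightarrow> y \<in> topspace X \<Longrightarrow> z \<in> topspace X
    \<Longrightarrow> q (q x y) z = q (q x z) (q y z)"
  unfolding topological_quandle_def by blast

lemma simplex_op_self_distrib:
  assumes "topological_quandle X q"
    and "x ` standard_simplex p \<subseteq> topspace X" "u ` standard_simplex p \<subseteq> topspace X"
    and "v ` standard_simplex p \<subseteq> topspace X"
  shows "simplex_op p q (simplex_op p q x v) (simplex_op p q u v) = simplex_op p q (simplex_op p q x u) v"
  unfolding simplex_op_def
  by (intro restrict_ext)
     (use assms in \<open>auto simp: image_subset_iff intro: topological_quandle_self_distrib[symmetric]\<close>)

lemma simplex_op_idem: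
  assumes "topological_quandle X q" "v ` standard_simplex p \<subseteq> topspace X"
  shows "simplex_op p q y (simplex_op p q v v) = simplex_op p q y v"
  unfolding simplex_op_def
  by (intro restrict_ext) (use assms in \<open>auto simp: image_subset_iff topological_quandle_idem\<close>)

definition twisted_face ::
    "('a \<Rightarrow> 'a \<Rightarrow> 'a) \<Rightarrow> nat \<Rightarrow> nat \<Rightarrow> ((nat \<Rightarrow> real) \<Rightarrow> 'a) \<Rightarrow> (nat \<Rightarrow> real) \<Rightarrow> 'a"
  where "twisted_face q n i \<sigma> = simplex_op (n - 1) q (quandle_d n i \<sigma>) (quandle_s n i \<sigma>)"

lemma quandle_d_twisted_face:
  assumes ij: "2 \<le> j" "j < i" "i \<le> n + 1"
  shows "quandle_d (n - 1) j (twisted_face q n i \<sigma>) = twisted_face q (n - 1) (i - 1) (quandle_d n j \<sigma>)"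
proof -
  obtain m where n: "n = Suc (Suc m)"
    using face_index_pair_cases[OF ij] by blast
  have "quandle_d (n - 1) j (twisted_face q n i \<sigma>)
      = simplex_op m q (quandle_d (n - 1) j (quandle_d n i \<sigma>)) (quandle_d (n - 1) j (quandle_s n i \<sigma>))"
    using ij by (simp add: twisted_face_def n quandle_d_simplex_op)
  also have "\<dots> = simplex_op m q (quandle_d (n - 1) (i - 1) (quandle_d n j \<sigma>)) (quandle_s (n - 1) (i - 1) (quandle_d n j \<sigma>))"
    by (simp only: quandle_d_quandle_d[OF ij] quandle_d_quandle_s[OF ij])
  also have "\<dots> = twisted_face q (n - 1) (i - 1) (quandle_d n j \<sigma>)"
    by (simp add: twisted_face_def n)
  finally show ?thesis .
qed

lemma twisted_face_quandle_d:
  assumes ij: "2 \<le> j" "j < i" "i \<le> n + 1"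
  shows "twisted_face q (n - 1) j (quandle_d n i \<sigma>) = quandle_d (n - 1) (i - 1) (twisted_face q n j \<sigma>)"
proof -
  obtain m where n: "n = Suc (Suc m)"
    using face_index_pair_cases[OF ij] by blast
  have "twisted_face q (n - 1) j (quandle_d n i \<sigma>)
      = simplex_op m q (quandle_d (n - 1) j (quandle_d n i \<sigma>)) (quandle_s (n - 1) j (quandle_d n i \<sigma>))"
    by (simp add: twisted_face_def n)
  also have "\<dots> = simplex_op m q (quandle_d (n - 1) (i - 1) (quandle_d n j \<sigma>)) (quandle_d (n - 1) (i - 1) (quandle_s n j \<sigma>))"
    by (simp only: quandle_d_quandle_d[OF ij] quandle_s_quandle_d[OF ij])
  also have "\<dots> = quandle_d (n - 1) (i - 1) (twisted_face q n j \<sigma>)"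
    using ij by (simp add: twisted_face_def n quandle_d_simplex_op)
  finally show ?thesis .
qed

lemma twisted_face_twisted_face_expand:
  assumes "1 \<le> k" "k \<le> n" "2 \<le> n"
  shows "twisted_face q (n - 1) k (twisted_face q n l \<sigma>)
    = simplex_op (n - 2) q
        (simplex_op (n - 2) q (quandle_d (n - 1) k (quandle_d n l \<sigma>)) (quandle_d (n - 1) k (quandle_s n l \<sigma>)))
        (simplex_op (n - 2) q (quandle_s (n - 1) k (quandle_d n l \<sigma>)) (quandle_s (n - 1) k (quandle_s n l \<sigma>)))"
proof -
  obtain p where n: "n = Suc (Suc p)"
    using \<open>2 \<le> n\<close> by (metis add_2_eq_Suc le_Suc_ex)
  show ?thesis
    using assms by (simp add: twisted_face_def n quandle_d_simplex_op quandle_s_simplex_op)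
qed

lemma twisted_face_twisted_face:
  assumes q: "topological_quandle X q" and \<sigma>: "\<sigma> ` standard_simplex n \<subseteq> topspace X"
    and ij: "2 \<le> j" "j < i" "i \<le> n + 1"
  shows "twisted_face q (n - 1) j (twisted_face q n i \<sigma>) = twisted_face q (n - 1) (i - 1) (twisted_face q n j \<sigma>)"
proof -
  obtain m where n: "n = Suc (Suc m)"
    using face_index_pair_cases[OF ij] by blast
  then have m: "n - 2 = m" "n - 1 = Suc m"
    by simp_all
  have bounds: "1 \<le> j" "j \<le> n" "1 \<le> i - 1" "i - 1 \<le> n" "2 \<le> n"
    using ij by auto
  define x where "x = quandle_d (n - 1) j (quandle_d n i \<sigma>)"
  define u where "u = quandle_s (n - 1) j (quandle_d n i \<sigma>)"
  define v where "v = quandle_d (n - 1) j (quandle_s n i \<sigma>)"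
  have di: "quandle_d n i \<sigma> ` standard_simplex (Suc m) \<subseteq> topspace X"
    and si: "quandle_s n i \<sigma> ` standard_simplex (Suc m) \<subseteq> topspace X"
    using \<sigma> ij unfolding n by (intro quandle_d_image_subset quandle_s_image_subset; simp)+
  have image: "x ` standard_simplex (n - 2) \<subseteq> topspace X" "u ` standard_simplex (n - 2) \<subseteq> topspace X"
    "v ` standard_simplex (n - 2) \<subseteq> topspace X"
    using ij n unfolding x_def u_def v_def m
    by (intro quandle_d_image_subset[OF di] quandle_s_image_subset[OF di] quandle_d_image_subset[OF si]; simp)+
  have "twisted_face q (n - 1) j (twisted_face q n i \<sigma>)
      = simplex_op (n - 2) q (simplex_op (n - 2) q x v) (simplex_op (n - 2) q u v)"
    unfolding twisted_face_twisted_face_expand[OF bounds(1,2,5)] x_def u_def v_def quandle_s_quandle_s[OF ij] ..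
  also have "\<dots> = simplex_op (n - 2) q (simplex_op (n - 2) q x u) v"
    using q image by (rule simplex_op_self_distrib)
  also have "\<dots> = simplex_op (n - 2) q (simplex_op (n - 2) q x u) (simplex_op (n - 2) q v v)"
    using q image(3) by (rule simplex_op_idem[symmetric])
  also have "\<dots> = twisted_face q (n - 1) (i - 1) (twisted_face q n j \<sigma>)"
    unfolding twisted_face_twisted_face_expand[OF bounds(3,4,5)] x_def u_def v_def
    by (simp only: quandle_d_quandle_d[OF ij] quandle_s_quandle_d[OF ij] quandle_d_quandle_s[OF ij]
        quandle_s_quandle_s'[OF ij])
  finally show ?thesis .
qed

lemma quandle_boundary_gen_eq_face_pair_boundary:
  "quandle_boundary_gen q = face_pair_boundary quandle_d (twisted_face q)"
  by (intro ext) (simp add: quandle_boundary_gen_def face_pair_boundary_def twisted_face_def)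

lemma quandle_boundary_gen_boundary:
  assumes "topological_quandle X q" "\<sigma> ` standard_simplex n \<subseteq> topspace X"
  shows "frag_extend (quandle_boundary_gen q (n - 1)) (quandle_boundary_gen q n \<sigma>) = 0"
  unfolding quandle_boundary_gen_eq_face_pair_boundary
  by (rule face_pair_boundary_boundary[where d = quandle_d and e = "twisted_face q",
        OF quandle_d_quandle_d quandle_d_twisted_face twisted_face_quandle_d
          twisted_face_twisted_face[OF assms]])

theorem mainTheorem1:
  fixes X :: "'a topology" and q :: "'a \<Rightarrow> 'a \<Rightarrow> 'a" and n :: nat and c :: "'a chain"
  assumes "topological_quandle X q"
    and "singular_chain n X c"
  shows "quandle_boundary q (n - 1) (quandle_boundary q n c) = 0"
proof (cases "n - 1 = 0")
  case True
  then show ?thesis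
    by (simp add: quandle_boundary_def)
next
  case False
  then have "quandle_boundary q (n - 1) (quandle_boundary q n c)
      = frag_extend (\<lambda>\<sigma>. frag_extend (quandle_boundary_gen q (n - 1)) (quandle_boundary_gen q n \<sigma>)) c"
    by (simp add: quandle_boundary_def frag_extend_frag_extend)
  also have "\<dots> = 0"
  proof (rule frag_extend_eq_0)
    fix \<sigma> assume "\<sigma> \<in> Poly_Mapping.keys c"
    with assms(2) have "singular_simplex n X \<sigma>"
      by (auto simp: singular_chain_def)
    then have "\<sigma> ` standard_simplex n \<subseteq> topspace X"
      using singular_simplex_subtopology[of n X "topspace X" \<sigma>] by simp
    with assms(1) show "frag_extend (quandle_boundary_gen q (n - 1)) (quandle_boundary_gen q n \<sigma>) = 0"
      by (rule quandle_boundary_gen_boundary)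
  qed
  finally show ?thesis .
qed

end
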